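(* Let $\mathcal{P}=\mathbb{Z}_N=\langle\theta\rangle$ and let $\mathcal{O}\subseteq\mathcal{P}^2$ be a minimally closed set of boundary conditions under the action of $\mathrm{SL}(2,\mathbb{Z})$. Then for every $x\in\mathcal{O}$ there exist $m\in\mathbb{Z}$ and $V\in\mathrm{SL}(2,\mathbb{Z})$ such that $x\ast V=(1,\theta^m)\in\mathcal{O}$.
   Context: Boundary conditions are elements of $\mathcal{P}^2=\mathcal{P}\times\mathcal{P}$. The right action of $V=\begin{pmatrix} a&b\\c&d\end{pmatrix}\in\mathrm{SL}(2,\mathbb{Z})$ is $(g,h)\ast V=(g^ah^{-c},g^{-b}h^d)$. A subset is closed if it is mapped into itself by every $V\in\mathrm{SL}(2,\mathbb{Z})$; a closed set is minimally closed if it is nonempty and contains no nonempty proper closed subset. *)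

theory Defs
  imports Main
begin

text \<open>The cyclic group P = Z_N is modelled additively as the residues {0..<N} (N > 0),
  with group law addition mod N. A generator theta is a residue coprime to N;
  theta^m is then (m * theta) mod N and the identity 1 of P is 0.\<close>

definition P :: "int \<Rightarrow> int set" where
  "P N = {0..<N}"

definition P2 :: "int \<Rightarrow> (int \<times> int) set" where
  "P2 N = P N \<times> P N"

text \<open>SL(2,Z): a matrix (a b; c d) is encoded as the tuple (a,b,c,d).\<close>
definition SL2 :: "(int \<times> int \<times> int \<times> int) set" where
  "SL2 = {(a,b,c,d). a*d - b*c = 1}"

text \<open>Right action (g,h) * V = (g^a h^(-c), g^(-b) h^d), written additively mod N.\<close>
fun act :: "int \<Rightarrow> int \<times> int \<Rightarrow> int \<times> int \<times> int \<times> int \<Rightarrow> int \<times> int" where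
  "act N (g,h) (a,b,c,d) = ((a*g - c*h) mod N, (d*h - b*g) mod N)"

definition closed_bc :: "int \<Rightarrow> (int \<times> int) set \<Rightarrow> bool" where
  "closed_bc N S \<longleftrightarrow> S \<subseteq> P2 N \<and> (\<forall>x\<in>S. \<forall>V\<in>SL2. act N x V \<in> S)"

definition minimally_closed :: "int \<Rightarrow> (int \<times> int) set \<Rightarrow> bool" where
  "minimally_closed N S \<longleftrightarrow> closed_bc N S \<and> S \<noteq> {} \<and>
     (\<forall>S'. S' \<subseteq> S \<and> S' \<noteq> {} \<and> closed_bc N S' \<longrightarrow> S' = S)"

end

theory Submission
  imports Defs "HOL-Number_Theory.Cong"
begin

text \<open>A suitable matrix in SL(2,Z) sends any (g, h) to one with
  trivial first entry: with k = gcd(h, g) take first column (h/k, g/k) and complete it to a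
  unimodular matrix by B\'ezout. The second entry then lies in P = \<langle>\<theta>\<rangle>, so it is a power of \<theta>.\<close>

lemma SL2_annihilates_first_entry:
  fixes g h :: int
  shows "\<exists>(a, b, c, d)\<in>SL2. a * g = c * h"
proof (cases "g = 0 \<and> h = 0")
  case True
  then show ?thesis by (intro bexI[of _ "(1, 0, 0, 1)"]) (auto simp: SL2_def)
next
  case False
  define k where "k = gcd h g"
  define a where "a = h div k"
  define c where "c = g div k"
  have "coprime a c"
    unfolding a_def c_def k_def using div_gcd_coprime[of h g] False by auto
  then obtain u v where uv: "u * a + v * c = 1"
    using bezout_int[of a c] by auto
  have "h = a * k" "g = c * k"
    unfolding a_def c_def k_def by simp_all
  then have "a * g = c * h" by simp
  moreover have "(a, - v, c, u) \<in> SL2"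
    using uv by (simp add: SL2_def algebra_simps)
  ultimately show ?thesis by auto
qed

lemma act_first_zero_in_SL2:
  "\<exists>V\<in>SL2. \<exists>y. act N x V = (0, y mod N)"
proof -
  obtain g h where x: "x = (g, h)" by (cases x)
  obtain a b c d where "(a, b, c, d) \<in> SL2" "a * g = c * h"
    using SL2_annihilates_first_entry[of g h] by auto
  then show ?thesis
    by (intro bexI[of _ "(a, b, c, d)"] exI[of _ "d * h - b * g"]) (simp_all add: x)
qed

lemma closed_bc_act:
  "closed_bc N S \<Longrightarrow> x \<in> S \<Longrightarrow> V \<in> SL2 \<Longrightarrow> act N x V \<in> S"
  unfolding closed_bc_def by blast

lemma residue_is_multiple_of_generator:
  fixes \<theta> N y :: int
  assumes "coprime \<theta> N"
  shows "\<exists>m. (m * \<theta>) mod N = y mod N"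
proof -
  from assms have "gcd \<theta> N dvd y" by simp
  then obtain m where "[\<theta> * m = y] (mod N)"
    using cong_solve_dvd_int by blast
  then show ?thesis by (auto simp: cong_def mult.commute)
qed

theorem lemma2p10:
  fixes N \<theta> :: int and S :: "(int \<times> int) set"
  assumes "N > 0"
    and "\<theta> \<in> P N" and "coprime \<theta> N"
    and "minimally_closed N S"
  shows "\<forall>x\<in>S. \<exists>m::int. \<exists>V\<in>SL2.
           act N x V = (0, (m * \<theta>) mod N) \<and> (0, (m * \<theta>) mod N) \<in> S"
proof
  fix x assume "x \<in> S"
  obtain V y where V: "V \<in> SL2" "act N x V = (0, y mod N)"
    using act_first_zero_in_SL2 by blast
  obtain m where m: "(m * \<theta>) mod N = y mod N"
    using residue_is_multiple_of_generator[OF assms(3)] by blast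
  have "act N x V \<in> S"
    using closed_bc_act assms(4) \<open>x \<in> S\<close> V(1) unfolding minimally_closed_def by blast
  with V m show "\<exists>m. \<exists>V\<in>SL2. act N x V = (0, (m * \<theta>) mod N) \<and> (0, (m * \<theta>) mod N) \<in> S"
    by metis
qed

end
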